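(* Let $\mathscr{A}$ be a $C^*$-algebra with identity such that the set $\mathscr{A}'_m$ of all linear multiplicative functionals $\varphi\colon\mathscr{A}\to\mathbb{C}$ is total (i.e., if $\varphi(a)=0$ for all $\varphi\in\mathscr{A}'_m$ then $a=0$). Let $\mathscr{X}$ be a right $\mathscr{A}$-module which is also a normed space. Let $n\geq 2$ and let $E, F\colon \mathscr{X}^n\to\mathscr{A}$ be multi-$\mathscr{A}$-linear functions, and assume that $E$ is bounded and strong. Then the following are equivalent: (i) for all $x_1,\dots,x_n\in\mathscr{X}$, $E(x_1,\dots,x_n)=0$ implies $F(x_1,\dots,x_n)=0$; (ii) there exists $c\in\mathscr{A}$ such that $F(x_1,\dots,x_n)=cE(x_1,\dots,x_n)$ for all $x_1,\dots,x_n\in\mathscr{X}$. Moreover, each of these conditions implies that $F$ is bounded.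
   Context: A right $\mathscr{A}$-module $\mathscr{X}$ is a complex vector space with a right $\mathscr{A}$-action satisfying $(\alpha x)a=x(\alpha a)=\alpha(xa)$. A function $F\colon\mathscr{X}^n\to\mathscr{A}$ is multi-$\mathscr{A}$-linear if for all $x_1,\dots,x_n,y_j\in\mathscr{X}$, $\alpha\in\mathbb{C}$, $a\in\mathscr{A}$ and $j=1,\dots,n$: (A) $F$ is additive in the $j$-th variable; (B) $F(x_1,\dots,\alpha x_j a,\dots,x_n)=\alpha F(x_1,\dots,x_n)a$ if $j$ is even; (C) $F(x_1,\dots,\alpha x_j a,\dots,x_n)=\overline{\alpha}a^*F(x_1,\dots,x_n)$ if $j$ is odd. $F$ is bounded if there is $M$ with $\|F(x_1,\dots,x_n)\|\le M\|x_1\|\cdots\|x_n\|$ for all $x_i$. With $G_{\mathscr{A}}$ the set of invertible elements of $\mathscr{A}$, $F$ is strong if there exists $w\in\mathscr{X}$ with $F(w,w,\dots,w)\in G_{\mathscr{A}}$. *)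

theory Defs
  imports "HOL-Analysis.Analysis"
begin

definition complex_normed_space :: "(complex \<Rightarrow> 'x::real_normed_vector \<Rightarrow> 'x) \<Rightarrow> bool" where
  "complex_normed_space sc \<longleftrightarrow>
     (\<forall>r x. sc (complex_of_real r) x = scaleR r x) \<and>
     (\<forall>\<alpha> x y. sc \<alpha> (x + y) = sc \<alpha> x + sc \<alpha> y) \<and>
     (\<forall>\<alpha> \<beta> x. sc (\<alpha> + \<beta>) x = sc \<alpha> x + sc \<beta> x) \<and>
     (\<forall>\<alpha> \<beta> x. sc (\<alpha> * \<beta>) x = sc \<alpha> (sc \<beta> x)) \<and>
     (\<forall>x. sc 1 x = x) \<and>
     (\<forall>\<alpha> x. norm (sc \<alpha> x) = cmod \<alpha> * norm x)"

definition cstar_algebra ::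
  "(complex \<Rightarrow> 'a::{real_normed_algebra_1, banach} \<Rightarrow> 'a) \<Rightarrow> ('a \<Rightarrow> 'a) \<Rightarrow> bool" where
  "cstar_algebra sA st \<longleftrightarrow>
     complex_normed_space sA \<and>
     (\<forall>\<alpha> a b. sA \<alpha> (a * b) = sA \<alpha> a * b) \<and>
     (\<forall>\<alpha> a b. sA \<alpha> (a * b) = a * sA \<alpha> b) \<and>
     (\<forall>a. st (st a) = a) \<and>
     (\<forall>a b. st (a + b) = st a + st b) \<and>
     (\<forall>\<alpha> a. st (sA \<alpha> a) = sA (cnj \<alpha>) (st a)) \<and>
     (\<forall>a b. st (a * b) = st b * st a) \<and>
     (\<forall>a. norm (st a * a) = norm a ^ 2)"

definition lin_mult_functional ::
  "(complex \<Rightarrow> 'a::real_normed_algebra_1 \<Rightarrow> 'a) \<Rightarrow> ('a \<Rightarrow> complex) \<Rightarrow> bool" where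
  "lin_mult_functional sA \<phi> \<longleftrightarrow>
     (\<forall>a b. \<phi> (a + b) = \<phi> a + \<phi> b) \<and>
     (\<forall>\<alpha> a. \<phi> (sA \<alpha> a) = \<alpha> * \<phi> a) \<and>
     (\<forall>a b. \<phi> (a * b) = \<phi> a * \<phi> b)"

definition mult_functionals_total :: "(complex \<Rightarrow> 'a::real_normed_algebra_1 \<Rightarrow> 'a) \<Rightarrow> bool" where
  "mult_functionals_total sA \<longleftrightarrow>
     (\<forall>a. (\<forall>\<phi>. lin_mult_functional sA \<phi> \<longrightarrow> \<phi> a = 0) \<longrightarrow> a = 0)"

definition right_module ::
  "(complex \<Rightarrow> 'a::real_normed_algebra_1 \<Rightarrow> 'a) \<Rightarrow> (complex \<Rightarrow> 'x::real_normed_vector \<Rightarrow> 'x)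
    \<Rightarrow> ('x \<Rightarrow> 'a \<Rightarrow> 'x) \<Rightarrow> bool" where
  "right_module sA sX act \<longleftrightarrow>
     (\<forall>x y a. act (x + y) a = act x a + act y a) \<and>
     (\<forall>x a b. act x (a + b) = act x a + act x b) \<and>
     (\<forall>x a b. act x (a * b) = act (act x a) b) \<and>
     (\<forall>\<alpha> x a. act (sX \<alpha> x) a = act x (sA \<alpha> a)) \<and>
     (\<forall>\<alpha> x a. act x (sA \<alpha> a) = sX \<alpha> (act x a))"

text \<open>Multi-A-linear functions X^n \<rightarrow> A, with X^n represented by lists of length n.
  List index i (0-based) corresponds to the variable j = i + 1 of the paper.\<close>
definition multi_A_linear ::
  "(complex \<Rightarrow> 'a::real_normed_algebra_1 \<Rightarrow> 'a) \<Rightarrow> ('a \<Rightarrow> 'a) \<Rightarrow> (complex \<Rightarrow> 'x \<Rightarrow> 'x)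
    \<Rightarrow> ('x::real_normed_vector \<Rightarrow> 'a \<Rightarrow> 'x) \<Rightarrow> nat \<Rightarrow> ('x list \<Rightarrow> 'a) \<Rightarrow> bool" where
  "multi_A_linear sA st sX act n F \<longleftrightarrow>
     (\<forall>xs. length xs = n \<longrightarrow> (\<forall>i < n.
        (\<forall>y. F (xs[i := xs ! i + y]) = F xs + F (xs[i := y])) \<and>
        (\<forall>\<alpha> a. F (xs[i := act (sX \<alpha> (xs ! i)) a]) =
           (if even (i + 1) then sA \<alpha> (F xs * a)
            else sA (cnj \<alpha>) (st a * F xs)))))"

definition bounded_multi :: "nat \<Rightarrow> ('x::real_normed_vector list \<Rightarrow> 'a::real_normed_vector) \<Rightarrow> bool" where
  "bounded_multi n F \<longleftrightarrow>
     (\<exists>M. \<forall>xs. length xs = n \<longrightarrow> norm (F xs) \<le> M * prod_list (map norm xs))"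

definition invertible_elems :: "'a::ring_1 set" where
  "invertible_elems = {a. \<exists>b. a * b = 1 \<and> b * a = 1}"

definition strong_multi :: "nat \<Rightarrow> ('x list \<Rightarrow> 'a::ring_1) \<Rightarrow> bool" where
  "strong_multi n F \<longleftrightarrow> (\<exists>w. F (replicate n w) \<in> invertible_elems)"

end

theory Submission
  imports Defs
begin

text \<open>Totality of the multiplicative functionals makes the algebra commutative, so acting on
  one slot by an algebra element a multiplies the value of a multi-A-linear map by a (in odd
  slots by the involute of a). Fix w with E(w,\<dots>,w) invertible and let c be F(w,\<dots>,w) times
  its inverse. If E ys is invertible and F ys = c E ys, then F = c E persists when one slot of
  ys is changed: acting on the old entry moves E to its value at the new entry, so the
  difference of the two entries is in the kernel of E, hence in that of F. As E is bounded, a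
  Neumann series keeps E invertible on a product of small balls around w, and changing one
  slot at a time gives F = c E there. Finally F - c E is real-linear in each slot, and a
  linear map vanishing on a ball vanishes everywhere.\<close>

lemma mult_commute_if_mult_functionals_total:
  fixes sA :: "complex \<Rightarrow> 'a::real_normed_algebra_1 \<Rightarrow> 'a"
    and a b :: 'a
  assumes "mult_functionals_total sA"
  shows "a * b = b * a"
proof -
  have "\<phi> (a * b - b * a) = 0" if "lin_mult_functional sA \<phi>" for \<phi>
  proof -
    have "\<phi> (a * b) = \<phi> (a * b - b * a) + \<phi> (b * a)"
      using that unfolding lin_mult_functional_def by (metis diff_add_cancel)
    then show ?thesis
      using that unfolding lin_mult_functional_def by (simp add: mult.commute)
  qed
  then have "a * b - b * a = 0"
    using assms unfolding mult_functionals_total_def by blast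
  then show ?thesis by simp
qed

lemma cstar_algebra_st_one:
  assumes "cstar_algebra sA st"
  shows "st 1 = 1"
proof -
  have inv: "\<And>a. st (st a) = a" and anti: "\<And>a b. st (a * b) = st b * st a"
    using assms unfolding cstar_algebra_def by auto
  have "st 1 = st 1 * st (st 1)" using inv by simp
  also have "\<dots> = st (st 1 * 1)" using anti by metis
  also have "\<dots> = 1" using inv by simp
  finally show ?thesis .
qed

lemma invertible_one_minus:
  fixes x :: "'a::{real_normed_algebra_1,banach}"
  assumes "norm x < 1"
  shows "1 - x \<in> invertible_elems"
proof -
  let ?y = "\<Sum>k. x ^ k"
  have sums: "(\<lambda>k. x ^ k) sums ?y"
    using complete_algebra_summable_geometric[OF assms] by (rule summable_sums)
  have telescope: "(\<lambda>k. x ^ k - x ^ Suc k) sums 1"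
    using telescope_sums'[OF LIMSEQ_power_zero[OF assms]] by simp
  have left: "(\<lambda>k. (1 - x) * x ^ k) = (\<lambda>k. x ^ k - x ^ Suc k)"
    by (simp add: algebra_simps)
  have right: "(\<lambda>k. x ^ k * (1 - x)) = (\<lambda>k. x ^ k - x ^ Suc k)"
    by (simp add: algebra_simps power_commutes)
  have "(1 - x) * ?y = 1"
    using sums_unique2[OF sums_mult[OF sums, of "1 - x", unfolded left] telescope] .
  moreover have "?y * (1 - x) = 1"
    using sums_unique2[OF sums_mult2[OF sums, of "1 - x", unfolded right] telescope] .
  ultimately show ?thesis unfolding invertible_elems_def by blast
qed

lemma invertible_if_norm_diff_small:
  fixes a e g :: "'a::{real_normed_algebra_1,banach}"
  assumes eg: "e * g = 1" "g * e = 1" and small: "norm (a - e) * norm g < 1"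
  shows "a \<in> invertible_elems"
proof -
  define x where "x = g * (e - a)"
  have "norm x \<le> norm (a - e) * norm g"
    unfolding x_def by (metis mult.commute norm_minus_commute norm_mult_ineq)
  then obtain y where y: "(1 - x) * y = 1" "y * (1 - x) = 1"
    using invertible_one_minus[of x] small unfolding invertible_elems_def by fastforce
  have a: "a = e * (1 - x)"
    unfolding x_def by (simp add: algebra_simps mult.assoc[symmetric] eg)
  have "a * (y * g) = 1"
    unfolding a by (metis eg(1) mult.assoc mult_1_left y(1))
  moreover have "(y * g) * a = 1"
    unfolding a by (metis eg(2) mult.assoc mult_1_left y(2))
  ultimately show ?thesis unfolding invertible_elems_def by blast
qed

lemma take_Suc_append_drop_Suc:
  assumes "length xs = length ys" "k < length xs"
  shows "take (Suc k) xs @ drop (Suc k) ys = (take k xs @ drop k ys)[k := xs ! k]"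
  using assms
  by (simp add: take_Suc_conv_app_nth list_update_append Cons_nth_drop_Suc[symmetric])

lemma prod_list_norm_le:
  fixes zs :: "'x::real_normed_vector list"
  assumes "k < length zs" "norm (zs ! k) \<le> d"
    and "\<And>i. i < length zs \<Longrightarrow> i \<noteq> k \<Longrightarrow> norm (zs ! i) \<le> R"
  shows "prod_list (map norm zs) \<le> d * R ^ (length zs - 1)"
proof -
  let ?I = "{0..<length zs} - {k}"
  have "prod_list (map norm zs) = norm (zs ! k) * (\<Prod>i\<in>?I. norm (zs ! i))"
    using assms(1) by (simp add: prod.list_conv_set_nth prod.remove)
  also have "\<dots> \<le> d * R ^ (length zs - 1)"
  proof (rule mult_mono)
    show "(\<Prod>i\<in>?I. norm (zs ! i)) \<le> R ^ (length zs - 1)"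
      using prod_mono[of ?I "\<lambda>i. norm (zs ! i)" "\<lambda>_. R"] assms(1,3) by simp
  qed (use assms(2) in \<open>auto intro: prod_nonneg order_trans[OF norm_ge_zero]\<close>)
  finally show ?thesis .
qed

lemma bounded_multi_nonneg_bound:
  assumes "bounded_multi n E"
  obtains M where "0 \<le> M" "\<And>xs. length xs = n \<Longrightarrow> norm (E xs) \<le> M * prod_list (map norm xs)"
proof -
  obtain M where M: "\<And>xs. length xs = n \<Longrightarrow> norm (E xs) \<le> M * prod_list (map norm xs)"
    using assms unfolding bounded_multi_def by blast
  show thesis
  proof (rule that[of "max M 0"])
    fix xs :: "'a list" assume "length xs = n"
    have "0 \<le> prod_list (map norm xs)" by (rule prod_list_nonneg) auto
    then show "norm (E xs) \<le> max M 0 * prod_list (map norm xs)"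
      using M[OF \<open>length xs = n\<close>] by (meson max.cobounded1 mult_right_mono order_trans)
  qed simp
qed

lemma bounded_multi_mult_left:
  fixes E F :: "'x::real_normed_vector list \<Rightarrow> 'a::real_normed_algebra"
  assumes "bounded_multi n E" and F: "\<And>xs. length xs = n \<Longrightarrow> F xs = c * E xs"
  shows "bounded_multi n F"
proof -
  obtain M where "0 \<le> M" and M: "\<And>xs. length xs = n \<Longrightarrow> norm (E xs) \<le> M * prod_list (map norm xs)"
    using bounded_multi_nonneg_bound[OF assms(1)] by blast
  have "norm (F xs) \<le> (norm c * M) * prod_list (map norm xs)" if "length xs = n" for xs
  proof -
    have "norm (F xs) \<le> norm c * norm (E xs)" using F[OF that] by (simp add: norm_mult_ineq)
    also have "\<dots> \<le> norm c * (M * prod_list (map norm xs))" using M[OF that] by (simp add: mult_left_mono)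
    finally show ?thesis by (simp add: mult.assoc)
  qed
  then show ?thesis unfolding bounded_multi_def by blast
qed

definition slot_linear :: "nat \<Rightarrow> ('x::real_vector list \<Rightarrow> 'b::real_vector) \<Rightarrow> bool" where
  "slot_linear n F \<longleftrightarrow> (\<forall>xs i. length xs = n \<longrightarrow> i < n \<longrightarrow> linear (\<lambda>x. F (xs[i := x])))"

lemma slot_linear_diff:
  assumes "slot_linear n F" "length xs = n" "i < n"
  shows "F (xs[i := x - y]) = F (xs[i := x]) - F (xs[i := y])"
  using assms linear_diff[of "\<lambda>x. F (xs[i := x])"] unfolding slot_linear_def by blast

lemma slot_linear_diff_mult_left:
  fixes E F :: "'x::real_vector list \<Rightarrow> 'a::real_normed_algebra"
  assumes "slot_linear n F" "slot_linear n E"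
  shows "slot_linear n (\<lambda>xs. F xs - c * E xs)"
  unfolding slot_linear_def
proof (intro allI impI)
  fix xs :: "'x list" and i assume "length xs = n" "i < n"
  then have "linear (\<lambda>x. F (xs[i := x]))" "linear (\<lambda>x. E (xs[i := x]))"
    using assms unfolding slot_linear_def by blast+
  then show "linear (\<lambda>x. F (xs[i := x]) - c * E (xs[i := x]))"
    using linear_compose[unfolded o_def, OF _ bounded_linear.linear[OF bounded_linear_mult_right]]
    by (intro linear_compose_sub) blast+
qed

lemma slot_linear_norm_diff_le:
  fixes E :: "'x::real_normed_vector list \<Rightarrow> 'b::real_normed_vector"
  assumes lin: "slot_linear n E" and "0 \<le> M"
    and bound: "\<And>zs. length zs = n \<Longrightarrow> norm (E zs) \<le> M * prod_list (map norm zs)"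
    and len: "length xs = n" "length ys = n"
    and close: "\<And>i. i < n \<Longrightarrow> norm (xs ! i - ys ! i) \<le> d"
    and small: "\<And>i. i < n \<Longrightarrow> norm (xs ! i) \<le> R" "\<And>i. i < n \<Longrightarrow> norm (ys ! i) \<le> R"
  shows "norm (E xs - E ys) \<le> n * M * d * R ^ (n - 1)"
proof -
  have "norm (E (take k xs @ drop k ys) - E ys) \<le> k * (M * d * R ^ (n - 1))" if "k \<le> n" for k
    using that
  proof (induction k)
    case 0
    then show ?case by simp
  next
    case (Suc k)
    define us where "us = take k xs @ drop k ys"
    have k: "k < n" and lus: "length us = n" using Suc.prems len by (auto simp: us_def)
    have us: "us ! i = (if i < k then xs ! i else ys ! i)" if "i < n" for i
      using that len by (simp add: us_def nth_append)
    have "us[k := ys ! k] = us" using us[OF k] list_update_id[of us k] by simp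
    then have "E (take (Suc k) xs @ drop (Suc k) ys) - E us = E (us[k := xs ! k - ys ! k])"
      using take_Suc_append_drop_Suc[of xs ys k, folded us_def] slot_linear_diff[OF lin lus k] len k
      by simp
    also have "norm \<dots> \<le> M * prod_list (map norm (us[k := xs ! k - ys ! k]))"
      using bound lus by simp
    also have "\<dots> \<le> M * (d * R ^ (n - 1))"
    proof (rule mult_left_mono)
      show "prod_list (map norm (us[k := xs ! k - ys ! k])) \<le> d * R ^ (n - 1)"
        using prod_list_norm_le[of k "us[k := xs ! k - ys ! k]" d R] lus k close us small
        by (auto simp: nth_list_update)
    qed fact
    finally have "norm (E (take (Suc k) xs @ drop (Suc k) ys) - E us) \<le> M * d * R ^ (n - 1)"
      by (simp add: mult.assoc)
    moreover have "norm (E us - E ys) \<le> k * (M * d * R ^ (n - 1))"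
      using Suc by (simp add: us_def)
    ultimately show ?case
      using norm_diff_triangle_le by (fastforce simp: algebra_simps)
  qed
  from this[of n] show ?thesis using len by (simp add: mult.assoc)
qed

lemma slot_linear_invertible_near_replicate:
  fixes E :: "'x::real_normed_vector list \<Rightarrow> 'a::{real_normed_algebra_1,banach}"
  assumes lin: "slot_linear n E" and "bounded_multi n E"
    and "E (replicate n w) \<in> invertible_elems"
  obtains d where "0 < d" "\<And>xs. length xs = n \<Longrightarrow> set xs \<subseteq> cball w d \<Longrightarrow> E xs \<in> invertible_elems"
proof -
  obtain M where "0 \<le> M" and bound: "\<And>xs. length xs = n \<Longrightarrow> norm (E xs) \<le> M * prod_list (map norm xs)"
    using bounded_multi_nonneg_bound[OF assms(2)] by blast
  obtain g where g: "E (replicate n w) * g = 1" "g * E (replicate n w) = 1"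
    using assms(3) unfolding invertible_elems_def by blast
  define R where "R = norm w + 1"
  define K where "K = real n * M * R ^ (n - 1) * norm g + 1"
  have "1 \<le> K" unfolding K_def R_def using \<open>0 \<le> M\<close> by simp
  define d where "d = min 1 (1 / K)"
  have "0 < d" unfolding d_def using \<open>1 \<le> K\<close> by simp
  moreover have "E xs \<in> invertible_elems" if xs: "length xs = n" "set xs \<subseteq> cball w d" for xs
  proof -
    have close: "norm (xs ! i - w) \<le> d" if "i < n" for i
    proof -
      have "xs ! i \<in> cball w d" using xs that nth_mem[of i xs] by blast
      then show ?thesis by (simp add: dist_norm norm_minus_commute)
    qed
    have "norm (xs ! i) \<le> R" if "i < n" for i
      using close[OF that] norm_triangle_sub[of "xs ! i" w] unfolding R_def d_def by linarith
    then have "norm (E xs - E (replicate n w)) \<le> n * M * d * R ^ (n - 1)"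
      using slot_linear_norm_diff_le[OF lin \<open>0 \<le> M\<close> bound xs(1), of "replicate n w" d R] close
      by (simp add: R_def)
    then have "norm (E xs - E (replicate n w)) * norm g \<le> n * M * d * R ^ (n - 1) * norm g"
      by (rule mult_right_mono) simp
    also have "\<dots> = d * (K - 1)" unfolding K_def by (simp add: algebra_simps)
    also have "\<dots> < d * K" using \<open>0 < d\<close> by simp
    also have "\<dots> \<le> 1" unfolding d_def using \<open>1 \<le> K\<close> by (simp add: min_def field_simps)
    finally show ?thesis using invertible_if_norm_diff_small[OF g] by blast
  qed
  ultimately show thesis using that by blast
qed

lemma replicate_update_induct:
  assumes "length xs = n" "set xs \<subseteq> B" "w \<in> B" "P (replicate n w)"
    and step: "\<And>ys i x. length ys = n \<Longrightarrow> set ys \<subseteq> B \<Longrightarrow> P ys \<Longrightarrow> i < n \<Longrightarrow> x \<in> B \<Longrightarrow> P (ys[i := x])"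
  shows "P xs"
proof -
  have "P (take k xs @ drop k (replicate n w))" if "k \<le> n" for k
    using that
  proof (induction k)
    case 0
    then show ?case using assms(4) by simp
  next
    case (Suc k)
    let ?ys = "take k xs @ drop k (replicate n w)"
    have "set ?ys \<subseteq> B"
      using assms(2,3) set_take_subset[of k xs] set_drop_subset[of k "replicate n w"] by auto
    moreover have "xs ! k \<in> B" using Suc.prems assms(1,2) nth_mem[of k xs] by auto
    ultimately have "P (?ys[k := xs ! k])"
      using step[of ?ys k "xs ! k"] Suc assms(1) by simp
    then show ?case using take_Suc_append_drop_Suc[of xs "replicate n w" k] Suc.prems assms(1) by simp
  qed
  from this[of n] show ?thesis using assms(1) by simp
qed

lemma linear_eq_0_if_eq_0_on_cball:
  fixes f :: "'x::real_normed_vector \<Rightarrow> 'b::real_vector"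
  assumes "linear f" "0 < d" "\<And>y. y \<in> cball w d \<Longrightarrow> f y = 0"
  shows "f x = 0"
proof -
  define t where "t = d / (norm x + 1)"
  have "0 < t" unfolding t_def using assms(2) by (simp add: add_nonneg_pos)
  have "t * norm x = d * (norm x / (norm x + 1))" unfolding t_def by simp
  also have "\<dots> \<le> d" using assms(2) by (intro mult_left_le) (auto simp: divide_le_eq_1 add_nonneg_pos)
  finally have "t * norm x \<le> d" .
  then have "w + t *\<^sub>R x \<in> cball w d" using \<open>0 < t\<close> by (simp add: dist_norm)
  then have "f w + t *\<^sub>R f x = 0"
    using assms(3) linear_add[OF assms(1)] linear_scale[OF assms(1)] by metis
  then show ?thesis using assms(2,3) \<open>0 < t\<close> by simp
qed

lemma slot_linear_eq_0_if_eq_0_near: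
  fixes D :: "'x::real_normed_vector list \<Rightarrow> 'b::real_vector"
  assumes lin: "slot_linear n D" and "0 < d"
    and near: "\<And>zs. length zs = n \<Longrightarrow> set zs \<subseteq> cball w d \<Longrightarrow> D zs = 0"
    and "length xs = n"
  shows "D xs = 0"
proof -
  have "D ys = 0" if "k \<le> n" "length ys = n" "set (drop k ys) \<subseteq> cball w d" for k ys
    using that
  proof (induction k arbitrary: ys)
    case 0
    then show ?case using near by simp
  next
    case (Suc k)
    then have k: "k < n" by simp
    have "D (ys[k := y]) = 0" if "y \<in> cball w d" for y
    proof -
      have "drop k (ys[k := y]) = y # drop (Suc k) ys"
        using k Suc.prems(2)
        by (metis Cons_nth_drop_Suc drop_update_cancel length_list_update lessI nth_list_update_eq)
      then have "set (drop k (ys[k := y])) \<subseteq> cball w d" using that Suc.prems(3) by simp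
      then show ?thesis using Suc.IH[of "ys[k := y]"] k Suc.prems(2) by simp
    qed
    moreover have "linear (\<lambda>x. D (ys[k := x]))"
      using lin Suc.prems(2) k unfolding slot_linear_def by blast
    ultimately have "D (ys[k := ys ! k]) = 0"
      using linear_eq_0_if_eq_0_on_cball[OF _ \<open>0 < d\<close>] by blast
    then show ?case by simp
  qed
  from this[of n xs] show ?thesis using assms(4) by simp
qed

locale cstar_module_setting =
  fixes sA :: "complex \<Rightarrow> 'a::{real_normed_algebra_1, banach} \<Rightarrow> 'a"
    and st :: "'a \<Rightarrow> 'a"
    and sX :: "complex \<Rightarrow> 'x::real_normed_vector \<Rightarrow> 'x"
    and act :: "'x \<Rightarrow> 'a \<Rightarrow> 'x"
  assumes cstar: "cstar_algebra sA st"
    and total: "mult_functionals_total sA"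
    and scalars_X: "complex_normed_space sX"
begin

lemma mult_commute_A: "a * b = b * a" for a b :: 'a
  using mult_commute_if_mult_functionals_total[OF total] .

lemma st_st: "st (st a) = a"
  using cstar unfolding cstar_algebra_def by blast

lemma st_one: "st 1 = 1"
  using cstar by (rule cstar_algebra_st_one)

lemma sA_one: "sA 1 a = a" and sA_of_real: "sA (complex_of_real r) a = r *\<^sub>R a"
  using cstar unfolding cstar_algebra_def complex_normed_space_def by auto

lemma sX_one: "sX 1 x = x" and sX_of_real: "sX (complex_of_real r) x = r *\<^sub>R x"
  using scalars_X unfolding complex_normed_space_def by auto

lemma multi_A_linear_act:
  assumes "multi_A_linear sA st sX act n F" "length xs = n" "i < n"
  shows "F (xs[i := act (xs ! i) (if even (i + 1) then a else st a)]) = F xs * a"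
proof -
  have "F (xs[i := act (sX 1 (xs ! i)) b]) =
      (if even (i + 1) then sA 1 (F xs * b) else sA (cnj 1) (st b * F xs))" for b
    using assms unfolding multi_A_linear_def by blast
  then show ?thesis by (simp add: sA_one sX_one st_st mult_commute_A)
qed

lemma multi_A_linear_act_one:
  assumes "multi_A_linear sA st sX act n F" "length xs = n" "i < n"
  shows "F (xs[i := act (xs ! i) 1]) = F xs"
  using multi_A_linear_act[OF assms, of 1] by (simp add: st_one cong: if_cong)

lemma multi_A_linear_slot_linear:
  assumes ml: "multi_A_linear sA st sX act n F"
  shows "slot_linear n F"
  unfolding slot_linear_def
proof (intro allI impI linearI)
  fix xs :: "'x list" and i x y
  assume len: "length xs = n" and i: "i < n"
  show "F (xs[i := x + y]) = F (xs[i := x]) + F (xs[i := y])"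
    using ml len i unfolding multi_A_linear_def
    by (metis length_list_update list_update_overwrite nth_list_update_eq)
  fix r
  let ?ys = "xs[i := x]"
  have "F (?ys[i := act (sX (complex_of_real r) (?ys ! i)) 1]) =
      (if even (i + 1) then sA (complex_of_real r) (F ?ys * 1)
       else sA (cnj (complex_of_real r)) (st 1 * F ?ys))"
    using ml len i unfolding multi_A_linear_def by (metis length_list_update)
  moreover have "F (?ys[i := act (sX (complex_of_real r) (?ys ! i)) 1]) = F (xs[i := r *\<^sub>R x])"
    using multi_A_linear_act_one[OF ml, of "xs[i := r *\<^sub>R x]" i] len i by (simp add: sX_of_real)
  ultimately show "F (xs[i := r *\<^sub>R x]) = r *\<^sub>R F (xs[i := x])"
    by (simp add: sA_of_real st_one cong: if_cong)
qed

lemma proportional_slot_update: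
  assumes mlE: "multi_A_linear sA st sX act n E" and mlF: "multi_A_linear sA st sX act n F"
    and kernel: "\<And>zs. length zs = n \<Longrightarrow> E zs = 0 \<Longrightarrow> F zs = 0"
    and len: "length ys = n" and i: "i < n"
    and "E ys \<in> invertible_elems" and proportional: "F ys = c * E ys"
  shows "F (ys[i := x]) = c * E (ys[i := x])"
proof -
  obtain h where h: "E ys * h = 1"
    using assms(6) unfolding invertible_elems_def by blast
  define a where "a = h * E (ys[i := x])"
  define q where "q = act (ys ! i) (if even (i + 1) then a else st a)"
  have "E (ys[i := q]) = E (ys[i := x])"
    using multi_A_linear_act[OF mlE len i] h unfolding q_def a_def by (simp add: mult.assoc[symmetric])
  then have "E (ys[i := x - q]) = 0"
    using slot_linear_diff[OF multi_A_linear_slot_linear[OF mlE] len i] by simp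
  then have "F (ys[i := x - q]) = 0" using kernel len by simp
  then have "F (ys[i := x]) = F (ys[i := q])"
    using slot_linear_diff[OF multi_A_linear_slot_linear[OF mlF] len i] by simp
  also have "\<dots> = c * (E ys * h) * E (ys[i := x])"
    using multi_A_linear_act[OF mlF len i] proportional unfolding q_def a_def by (simp add: mult.assoc)
  finally show ?thesis using h by simp
qed

lemma proportional_if_kernel_preserved:
  assumes mlE: "multi_A_linear sA st sX act n E" and mlF: "multi_A_linear sA st sX act n F"
    and "bounded_multi n E" "strong_multi n E"
    and kernel: "\<And>zs. length zs = n \<Longrightarrow> E zs = 0 \<Longrightarrow> F zs = 0"
  shows "\<exists>c. \<forall>xs. length xs = n \<longrightarrow> F xs = c * E xs"
proof -
  obtain w where inv: "E (replicate n w) \<in> invertible_elems"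
    using assms(4) unfolding strong_multi_def by blast
  then obtain g where g: "g * E (replicate n w) = 1"
    unfolding invertible_elems_def by blast
  define c where "c = F (replicate n w) * g"
  obtain d where "0 < d" and inv_near: "\<And>xs. length xs = n \<Longrightarrow> set xs \<subseteq> cball w d \<Longrightarrow> E xs \<in> invertible_elems"
    using slot_linear_invertible_near_replicate[OF multi_A_linear_slot_linear[OF mlE] assms(3) inv]
    by blast
  have near: "F xs - c * E xs = 0" if "length xs = n" "set xs \<subseteq> cball w d" for xs
    using that unfolding right_minus_eq
  proof (rule replicate_update_induct)
    show "w \<in> cball w d" using \<open>0 < d\<close> by simp
    show "F (replicate n w) = c * E (replicate n w)" unfolding c_def by (simp add: mult.assoc g)
  qed (use proportional_slot_update[OF mlE mlF kernel] inv_near in blast)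
  have lin: "slot_linear n (\<lambda>xs. F xs - c * E xs)"
    using multi_A_linear_slot_linear[OF mlF] multi_A_linear_slot_linear[OF mlE]
    by (rule slot_linear_diff_mult_left)
  have "F xs - c * E xs = 0" if "length xs = n" for xs
    by (rule slot_linear_eq_0_if_eq_0_near[OF lin \<open>0 < d\<close> near that])
  then show ?thesis by auto
qed

end

theorem theorem3p6:
  fixes sA :: "complex \<Rightarrow> 'a::{real_normed_algebra_1, banach} \<Rightarrow> 'a"
    and st :: "'a \<Rightarrow> 'a"
    and sX :: "complex \<Rightarrow> 'x::real_normed_vector \<Rightarrow> 'x"
    and act :: "'x \<Rightarrow> 'a \<Rightarrow> 'x"
    and n :: nat
    and E F :: "'x list \<Rightarrow> 'a"
  assumes "cstar_algebra sA st"
    and "mult_functionals_total sA"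
    and "complex_normed_space sX"
    and "right_module sA sX act"
    and "n \<ge> 2"
    and "multi_A_linear sA st sX act n E"
    and "multi_A_linear sA st sX act n F"
    and "bounded_multi n E"
    and "strong_multi n E"
  shows "((\<forall>xs. length xs = n \<longrightarrow> E xs = 0 \<longrightarrow> F xs = 0) \<longleftrightarrow>
          (\<exists>c. \<forall>xs. length xs = n \<longrightarrow> F xs = c * E xs))
       \<and> ((\<forall>xs. length xs = n \<longrightarrow> E xs = 0 \<longrightarrow> F xs = 0) \<longrightarrow> bounded_multi n F)
       \<and> ((\<exists>c. \<forall>xs. length xs = n \<longrightarrow> F xs = c * E xs) \<longrightarrow> bounded_multi n F)"
proof -
  interpret cstar_module_setting sA st sX act
    using assms(1-3) by unfold_locales
  have "(\<forall>xs. length xs = n \<longrightarrow> E xs = 0 \<longrightarrow> F xs = 0) \<longrightarrow> (\<exists>c. \<forall>xs. length xs = n \<longrightarrow> F xs = c * E xs)"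
    using proportional_if_kernel_preserved[OF assms(6-9)] by blast
  moreover have "(\<exists>c. \<forall>xs. length xs = n \<longrightarrow> F xs = c * E xs) \<longrightarrow> bounded_multi n F"
    using bounded_multi_mult_left[OF assms(8)] by blast
  ultimately show ?thesis by auto
qed

end
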